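(* For every graph $G=(V,E)$, $\rho_T(G)=\widehat{\Theta}(G)$.
   Context: Graphs are finite and simple. A graph $G=(V,E)$ is a threshold graph if there exist weights $w:V\to\mathbb{R}$ and a real number $s$ such that for all distinct $i,j\in V$: $w(i)+w(j)\ge s$ iff $ij\in E$. The threshold graph intersection number $\widehat{\Theta}(G)$ is the least $k\ge 1$ such that there exist threshold graphs $(V,E_1),\dots,(V,E_k)$ on the same vertex set with $E_1\cap\dots\cap E_k=E$. For $u,v\in(\mathbb{R}\cup\{\infty\})^k$ the min-plus tropical dot product is $u\odot v=\min_i(u_i+v_i)$. A min-plus $k$-tropical dot product representation of $G$ is a map $f:V\to(\mathbb{R}\cup\{\infty\})^k$ with a threshold $t>0$ such that for all distinct $x,y\in V$: $xy\in E$ iff $f(x)\odot f(y)\ge t$. $\rho_T(G)$ is the least $k\ge 1$ for which such a representation exists. *)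

theory Defs
  imports "HOL-Library.Extended_Real"
begin

definition simple_graph :: "'a set \<Rightarrow> 'a set set \<Rightarrow> bool" where
  "simple_graph V E \<longleftrightarrow> finite V \<and>
     (\<forall>e\<in>E. \<exists>x y. x \<in> V \<and> y \<in> V \<and> x \<noteq> y \<and> e = {x, y})"

definition threshold_graph :: "'a set \<Rightarrow> 'a set set \<Rightarrow> bool" where
  "threshold_graph V E \<longleftrightarrow> simple_graph V E \<and>
     (\<exists>(w::'a \<Rightarrow> real) (s::real). \<forall>i\<in>V. \<forall>j\<in>V. i \<noteq> j \<longrightarrow>
        (w i + w j \<ge> s \<longleftrightarrow> {i, j} \<in> E))"

definition threshold_intersection_number :: "'a set \<Rightarrow> 'a set set \<Rightarrow> nat" where
  "threshold_intersection_number V E = (LEAST k. k \<ge> 1 \<and>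
     (\<exists>Es :: nat \<Rightarrow> 'a set set. (\<forall>i<k. threshold_graph V (Es i)) \<and>
        (\<Inter>i<k. Es i) = E))"

text \<open>Min-plus tropical dot product of the first k coordinates of vectors in
  (R \<union> {\<infinity>})^k, represented as functions nat \<Rightarrow> ereal (coordinates 0..k-1).\<close>
definition trop_dot :: "nat \<Rightarrow> (nat \<Rightarrow> ereal) \<Rightarrow> (nat \<Rightarrow> ereal) \<Rightarrow> ereal" where
  "trop_dot k u v = Min ((\<lambda>i. u i + v i) ` {..<k})"

definition trop_rep :: "nat \<Rightarrow> 'a set \<Rightarrow> 'a set set \<Rightarrow> ('a \<Rightarrow> nat \<Rightarrow> ereal) \<Rightarrow> real \<Rightarrow> bool" where
  "trop_rep k V E f t \<longleftrightarrow> t > 0 \<and>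
     (\<forall>x\<in>V. \<forall>i<k. f x i \<noteq> -\<infinity>) \<and>
     (\<forall>x\<in>V. \<forall>y\<in>V. x \<noteq> y \<longrightarrow> ({x, y} \<in> E \<longleftrightarrow> trop_dot k (f x) (f y) \<ge> ereal t))"

definition rho_T :: "'a set \<Rightarrow> 'a set set \<Rightarrow> nat" where
  "rho_T V E = (LEAST k. k \<ge> 1 \<and> (\<exists>f t. trop_rep k V E f t))"

end

theory Submission
  imports Defs
begin

text \<open>Both numbers are the least k for which E is the intersection of k threshold graphs,
  read coordinatewise: f x \<odot> f y \<ge> t says that the pair clears the threshold t in every
  coordinate, and the i-th coordinates of f form the weights of the i-th threshold graph.
  The only discrepancy is the value \<infinity>, which a sufficiently large real weight imitates,
  and the positivity of t, which a shift of the weights arranges.\<close>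

definition threshold_edges :: "'a set \<Rightarrow> ('a \<Rightarrow> 'b::{ord,plus}) \<Rightarrow> 'b \<Rightarrow> 'a set set" where
  "threshold_edges V w s = {{x, y} | x y. x \<in> V \<and> y \<in> V \<and> x \<noteq> y \<and> s \<le> w x + w y}"

lemma trop_dot_ge_iff:
  assumes "k \<ge> 1"
  shows "c \<le> trop_dot k u v \<longleftrightarrow> (\<forall>i<k. c \<le> u i + v i)"
proof -
  from assms have "{..<k} \<noteq> {}" by (simp add: lessThan_empty_iff)
  then show ?thesis unfolding trop_dot_def by (auto simp: Min_ge_iff)
qed

lemma simple_graph_subset: "simple_graph V E \<Longrightarrow> E' \<subseteq> E \<Longrightarrow> simple_graph V E'"
  unfolding simple_graph_def by blast

lemma simple_graph_eqI:
  assumes "simple_graph V A" "simple_graph V B"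
    and "\<And>x y. x \<in> V \<Longrightarrow> y \<in> V \<Longrightarrow> x \<noteq> y \<Longrightarrow> {x, y} \<in> A \<longleftrightarrow> {x, y} \<in> B"
  shows "A = B"
  using assms unfolding simple_graph_def by (metis subsetI subset_antisym)

lemma simple_graph_threshold_edges: "finite V \<Longrightarrow> simple_graph V (threshold_edges V w s)"
  unfolding simple_graph_def threshold_edges_def by blast

lemma mem_threshold_edges:
  fixes w :: "'a \<Rightarrow> 'b::{ord,ab_semigroup_add}"
  assumes "x \<in> V" "y \<in> V" "x \<noteq> y"
  shows "{x, y} \<in> threshold_edges V w s \<longleftrightarrow> s \<le> w x + w y"
  using assms unfolding threshold_edges_def by (auto simp: doubleton_eq_iff add.commute)

lemma threshold_graph_threshold_edges:
  fixes w :: "'a \<Rightarrow> real"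
  assumes "finite V"
  shows "threshold_graph V (threshold_edges V w s)"
  using assms unfolding threshold_graph_def
  by (auto simp: simple_graph_threshold_edges mem_threshold_edges)

lemma ereal_threshold_iff_capped:
  fixes a b :: ereal and t M :: real
  assumes "a \<noteq> -\<infinity>" "b \<noteq> -\<infinity>" "\<bar>t\<bar> \<le> M" "t \<le> M + real_of_ereal a" "t \<le> M + real_of_ereal b"
  shows "ereal t \<le> a + b \<longleftrightarrow>
    t \<le> (if a = \<infinity> then M else real_of_ereal a) + (if b = \<infinity> then M else real_of_ereal b)"
  using assms by (cases a; cases b) simp_all

lemma threshold_graph_threshold_edges_ereal:
  fixes w :: "'a \<Rightarrow> ereal"
  assumes fin: "finite V" and no_minf: "\<And>x. x \<in> V \<Longrightarrow> w x \<noteq> -\<infinity>"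
  shows "threshold_graph V (threshold_edges V w (ereal t))"
proof -
  define M where "M = \<bar>t\<bar> + (\<Sum>x\<in>V. \<bar>real_of_ereal (w x)\<bar>)"
  define w' where "w' x = (if w x = \<infinity> then M else real_of_ereal (w x))" for x
  have M_large: "t \<le> M + real_of_ereal (w x)" "\<bar>t\<bar> \<le> M" if "x \<in> V" for x
  proof -
    have "\<bar>real_of_ereal (w x)\<bar> \<le> (\<Sum>x\<in>V. \<bar>real_of_ereal (w x)\<bar>)"
      using fin that by (intro member_le_sum abs_ge_zero) auto
    then show "t \<le> M + real_of_ereal (w x)" "\<bar>t\<bar> \<le> M" unfolding M_def by linarith+
  qed
  have same_edges: "ereal t \<le> w x + w y \<longleftrightarrow> t \<le> w' x + w' y" if "x \<in> V" "y \<in> V" for x y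
    unfolding w'_def using that by (intro ereal_threshold_iff_capped no_minf M_large)
  have "threshold_edges V w (ereal t) = threshold_edges V w' t"
    by (rule simple_graph_eqI[of V]) (auto simp: fin simple_graph_threshold_edges mem_threshold_edges same_edges)
  with fin show ?thesis by (simp add: threshold_graph_threshold_edges)
qed

lemma threshold_intersection_of_trop_rep:
  assumes G: "simple_graph V E" and k: "k \<ge> 1" and rep: "trop_rep k V E f t"
  shows "\<exists>Es. (\<forall>i<k. threshold_graph V (Es i)) \<and> (\<Inter>i<k. Es i) = E"
proof -
  define Es where "Es i = threshold_edges V (\<lambda>x. f x i) (ereal t)" for i
  have fin: "finite V" using G by (simp add: simple_graph_def)
  have no_minf: "f x i \<noteq> -\<infinity>" if "x \<in> V" "i < k" for x i
    using rep that by (simp add: trop_rep_def)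
  have thr: "\<forall>i<k. threshold_graph V (Es i)"
    unfolding Es_def using fin no_minf by (simp add: threshold_graph_threshold_edges_ereal)
  have "(\<Inter>i<k. Es i) \<subseteq> Es 0"
    using k by (intro INT_lower) simp
  then have "simple_graph V (\<Inter>i<k. Es i)"
    by (rule simple_graph_subset[rotated]) (simp add: Es_def fin simple_graph_threshold_edges)
  then have "(\<Inter>i<k. Es i) = E"
  proof (rule simple_graph_eqI[OF _ G])
    fix x y assume xy: "x \<in> V" "y \<in> V" "x \<noteq> y"
    have "{x, y} \<in> (\<Inter>i<k. Es i) \<longleftrightarrow> (\<forall>i<k. ereal t \<le> f x i + f y i)"
      by (auto simp: Es_def mem_threshold_edges xy)
    also have "\<dots> \<longleftrightarrow> ereal t \<le> trop_dot k (f x) (f y)"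
      by (simp add: trop_dot_ge_iff[OF k])
    also have "\<dots> \<longleftrightarrow> {x, y} \<in> E"
      using rep xy by (simp add: trop_rep_def)
    finally show "{x, y} \<in> (\<Inter>i<k. Es i) \<longleftrightarrow> {x, y} \<in> E" .
  qed
  with thr show ?thesis by blast
qed

lemma trop_rep_of_threshold_intersection:
  assumes k: "k \<ge> 1" and thr: "\<forall>i<k. threshold_graph V (Es i)" and E: "(\<Inter>i<k. Es i) = E"
  shows "\<exists>f t. trop_rep k V E f t"
proof -
  have "\<forall>i. \<exists>w s. i < k \<longrightarrow> (\<forall>x\<in>V. \<forall>y\<in>V. x \<noteq> y \<longrightarrow>
      ((s::real) \<le> w x + w y \<longleftrightarrow> {x, y} \<in> Es i))"
    using thr unfolding threshold_graph_def by blast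
  then obtain w s where ws: "\<And>i x y. i < k \<Longrightarrow> x \<in> V \<Longrightarrow> y \<in> V \<Longrightarrow> x \<noteq> y \<Longrightarrow>
      (s i :: real) \<le> w i x + w i y \<longleftrightarrow> {x, y} \<in> Es i"
    by metis
  define f where "f x i = ereal (w i x + (1 - s i) / 2)" for x i
  have shift: "ereal 1 \<le> f x i + f y i \<longleftrightarrow> s i \<le> w i x + w i y" for x y i
    unfolding f_def by simp
  have "{x, y} \<in> E \<longleftrightarrow> ereal 1 \<le> trop_dot k (f x) (f y)"
    if "x \<in> V" "y \<in> V" "x \<noteq> y" for x y
  proof -
    have "{x, y} \<in> E \<longleftrightarrow> (\<forall>i<k. {x, y} \<in> Es i)" using E by auto
    also have "\<dots> \<longleftrightarrow> (\<forall>i<k. ereal 1 \<le> f x i + f y i)" using that by (simp add: ws shift)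
    finally show ?thesis by (simp add: trop_dot_ge_iff[OF k])
  qed
  then have "trop_rep k V E f 1" unfolding trop_rep_def f_def by simp
  then show ?thesis by blast
qed

theorem mainTheorem8:
  fixes V :: "'a set" and E :: "'a set set"
  assumes "simple_graph V E"
  shows "rho_T V E = threshold_intersection_number V E"
proof -
  have "k \<ge> 1 \<and> (\<exists>f t. trop_rep k V E f t) \<longleftrightarrow>
      k \<ge> 1 \<and> (\<exists>Es :: nat \<Rightarrow> 'a set set. (\<forall>i<k. threshold_graph V (Es i)) \<and> (\<Inter>i<k. Es i) = E)"
    for k
    using threshold_intersection_of_trop_rep[OF assms, of k] trop_rep_of_threshold_intersection[of k V _ E]
    by blast
  then show ?thesis
    unfolding rho_T_def threshold_intersection_number_def by presburger
qed

end
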